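(* Let $m,n,m',n'\in\mathbb N$, $\delta,\delta'\in\{\pm1\}$, $\lambda,\lambda'\in\mathbb C\setminus\{0\}$, and let $\ell,\ell'$ be integers with $0\le\ell\le m+n$ and $0\le\ell'\le m'+n'$. Then the $\mathcal H_q$-module $(L_m\otimes L_n)^{\delta,\lambda}(\delta q^{m+n-2\ell})$ is isomorphic to $(L_{m'}\otimes L_{n'})^{\delta',\lambda'}(\delta' q^{m'+n'-2\ell'})$ if and only if $\delta=\delta'$ and $(m',n',\ell',\lambda')\in\{(m,n,\ell,\lambda),\ (m+n-\ell,\ell,n,\lambda q^{\ell-n}),\ (\ell,m+n-\ell,m,\lambda q^{\ell-m}),\ (n,m,m+n-\ell,\lambda q^{2\ell-m-n})\}$.
   Context: Throughout, $q$ is a nonzero complex number that is not a root of unity; $[x,y]=xy-yx$, $[x,y]_q=qxy-q^{-1}yx$, $[n]_q=\frac{q^n-q^{-n}}{q-q^{-1}}$. $\mathfrak{W}_q$ is the algebra over $\mathbb C$ generated by $E_1,E_2,F_1,F_2,K_1^{\pm1},K_2^{\pm1},I^{\pm1}$ subject to: $I$ is central; $II^{-1}=I^{-1}I=1$, $K_1K_1^{-1}=K_1^{-1}K_1=1$, $K_2K_2^{-1}=K_2^{-1}K_2=1$; $[K_1,E_2]=[K_1,F_2]=[K_1,K_2]=[K_2,E_1]=[K_2,F_1]=0$; $[E_1,K_1]_q=[K_1,F_1]_q=[E_2,K_2]_q=[K_2,F_2]_q=0$; $[E_1,E_2]=[E_1,F_2]=[F_1,E_2]=[F_1,F_2]=0$;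 $[E_1,F_1]=\frac{K_1-IK_1^{-1}}{q-q^{-1}}$; $[E_2,F_2]=\frac{IK_2-K_2^{-1}}{q-q^{-1}}$. The universal $q$-Hahn algebra $\mathcal H_q$ is the algebra generated by $A,B,C$ subject to the relations that each of $\frac{[B,C]_q}{q^2-q^{-2}}+A$, $[C,A]_q$, $\frac{[A,B]_q}{q^2-q^{-2}}+C$ commutes with $A,B,C$. Every $\mathfrak{W}_q$-module is an $\mathcal H_q$-module via the algebra homomorphism $\widetilde\natural:\mathcal H_q\to\mathfrak{W}_q$ with $A\mapsto K_2^{-1}$, $B\mapsto (q-q^{-1})^2(E_1+K_1^{-1}E_2)(F_1K_2+F_2)+q^{-1}K_1K_2+qK_1^{-1}K_2^{-1}$, $C\mapsto IK_1^{-1}-q(q-q^{-1})^2E_1F_2K_2^{-1}$. $(L_m\otimes L_n)^{\delta,\lambda}$ is the $\mathfrak{W}_q$-module with basis $v_i^{(m)}\otimes v_j^{(n)}$ ($0\le i\le m$, $0\le j\le n$) on which: $E_1v_i^{(m)}\otimes v_j^{(n)}=\lambda[i]_q[m-i+1]_qv_{i-1}^{(m)}\otimes v_j^{(n)}$ (zero if $i=0$); $E_2v_i^{(m)}\otimes v_j^{(n)}=\delta\lambda[j]_q[n-j+1]_qv_i^{(m)}\otimes v_{j-1}^{(n)}$ (zero if $j=0$); $F_1v_i^{(m)}\otimes v_j^{(n)}=v_{i+1}^{(m)}\otimes v_j^{(n)}$ (zero if $i=m$); $F_2v_i^{(m)}\otimes v_j^{(n)}=v_i^{(m)}\otimes v_{j+1}^{(n)}$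 (zero if $j=n$); $K_1$ acts by $\lambda q^{m-2i}$, $K_2$ by $\delta\lambda^{-1}q^{n-2j}$, $I$ by $\lambda^2$. For a $\mathfrak W_q$-module $V$ and $\theta\in\mathbb C$, $V(\theta)$ denotes the $\theta$-eigenspace of $K_1K_2$ on $V$ (an $\mathcal H_q$-submodule). *)

theory Defs
  imports Complex_Main
begin

text \<open>Vectors of the module (L_m \<otimes> L_n)^{delta,lambda} are represented by their
coordinate functions c, meaning sum over i,j of c i j times v_i \<otimes> v_j, where
c i j = 0 whenever i > m or j > n.\<close>

type_synonym vec = "nat \<Rightarrow> nat \<Rightarrow> complex"

definition qnum :: "complex \<Rightarrow> nat \<Rightarrow> complex" where
  "qnum q k = (q ^ k - inverse q ^ k) / (q - inverse q)"

definition tens_space :: "nat \<Rightarrow> nat \<Rightarrow> vec set" where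
  "tens_space m n = {c. \<forall>i j. (m < i \<or> n < j) \<longrightarrow> c i j = 0}"

definition vadd :: "vec \<Rightarrow> vec \<Rightarrow> vec" where
  "vadd u w = (\<lambda>i j. u i j + w i j)"

definition vsmul :: "complex \<Rightarrow> vec \<Rightarrow> vec" where
  "vsmul a u = (\<lambda>i j. a * u i j)"

definition opE1 :: "complex \<Rightarrow> nat \<Rightarrow> nat \<Rightarrow> complex \<Rightarrow> complex \<Rightarrow> vec \<Rightarrow> vec" where
  "opE1 q m n d l c = (\<lambda>i j. if i < m then l * qnum q (i+1) * qnum q (m - i) * c (i+1) j else 0)"

definition opE2 :: "complex \<Rightarrow> nat \<Rightarrow> nat \<Rightarrow> complex \<Rightarrow> complex \<Rightarrow> vec \<Rightarrow> vec" where
  "opE2 q m n d l c = (\<lambda>i j. if j < n then d * l * qnum q (j+1) * qnum q (n - j) * c i (j+1) else 0)"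

definition opF1 :: "complex \<Rightarrow> nat \<Rightarrow> nat \<Rightarrow> complex \<Rightarrow> complex \<Rightarrow> vec \<Rightarrow> vec" where
  "opF1 q m n d l c = (\<lambda>i j. if 0 < i \<and> i \<le> m then c (i-1) j else 0)"

definition opF2 :: "complex \<Rightarrow> nat \<Rightarrow> nat \<Rightarrow> complex \<Rightarrow> complex \<Rightarrow> vec \<Rightarrow> vec" where
  "opF2 q m n d l c = (\<lambda>i j. if 0 < j \<and> j \<le> n then c i (j-1) else 0)"

definition opK1 :: "complex \<Rightarrow> nat \<Rightarrow> nat \<Rightarrow> complex \<Rightarrow> complex \<Rightarrow> vec \<Rightarrow> vec" where
  "opK1 q m n d l c = (\<lambda>i j. l * q powi (int m - 2 * int i) * c i j)"

definition opK1inv :: "complex \<Rightarrow> nat \<Rightarrow> nat \<Rightarrow> complex \<Rightarrow> complex \<Rightarrow> vec \<Rightarrow> vec" where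
  "opK1inv q m n d l c = (\<lambda>i j. inverse (l * q powi (int m - 2 * int i)) * c i j)"

definition opK2 :: "complex \<Rightarrow> nat \<Rightarrow> nat \<Rightarrow> complex \<Rightarrow> complex \<Rightarrow> vec \<Rightarrow> vec" where
  "opK2 q m n d l c = (\<lambda>i j. d * inverse l * q powi (int n - 2 * int j) * c i j)"

definition opK2inv :: "complex \<Rightarrow> nat \<Rightarrow> nat \<Rightarrow> complex \<Rightarrow> complex \<Rightarrow> vec \<Rightarrow> vec" where
  "opK2inv q m n d l c = (\<lambda>i j. inverse (d * inverse l * q powi (int n - 2 * int j)) * c i j)"

definition opI :: "complex \<Rightarrow> nat \<Rightarrow> nat \<Rightarrow> complex \<Rightarrow> complex \<Rightarrow> vec \<Rightarrow> vec" where
  "opI q m n d l c = vsmul (l\<^sup>2) c"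

text \<open>Images of the generators A, B, C of H_q under the homomorphism to W_q.\<close>

definition actA :: "complex \<Rightarrow> nat \<Rightarrow> nat \<Rightarrow> complex \<Rightarrow> complex \<Rightarrow> vec \<Rightarrow> vec" where
  "actA q m n d l c = opK2inv q m n d l c"

definition actB :: "complex \<Rightarrow> nat \<Rightarrow> nat \<Rightarrow> complex \<Rightarrow> complex \<Rightarrow> vec \<Rightarrow> vec" where
  "actB q m n d l c =
     (let E1 = opE1 q m n d l; E2 = opE2 q m n d l; F1 = opF1 q m n d l; F2 = opF2 q m n d l;
          K1 = opK1 q m n d l; K2 = opK2 q m n d l; K1i = opK1inv q m n d l; K2i = opK2inv q m n d l;
          w = vadd (F1 (K2 c)) (F2 c)
      in vadd (vadd (vsmul ((q - inverse q)\<^sup>2) (vadd (E1 w) (K1i (E2 w))))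
                    (vsmul (inverse q) (K1 (K2 c))))
              (vsmul q (K1i (K2i c))))"

definition actC :: "complex \<Rightarrow> nat \<Rightarrow> nat \<Rightarrow> complex \<Rightarrow> complex \<Rightarrow> vec \<Rightarrow> vec" where
  "actC q m n d l c =
     vadd (opI q m n d l (opK1inv q m n d l c))
          (vsmul (- q * (q - inverse q)\<^sup>2)
                 (opE1 q m n d l (opF2 q m n d l (opK2inv q m n d l c))))"

definition eig_space :: "complex \<Rightarrow> nat \<Rightarrow> nat \<Rightarrow> complex \<Rightarrow> complex \<Rightarrow> complex \<Rightarrow> vec set" where
  "eig_space q m n d l \<theta> =
     {c \<in> tens_space m n. opK1 q m n d l (opK2 q m n d l c) = vsmul \<theta> c}"

definition Hq_iso ::
  "complex \<Rightarrow> nat \<Rightarrow> nat \<Rightarrow> complex \<Rightarrow> complex \<Rightarrow> complex \<Rightarrow>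
   nat \<Rightarrow> nat \<Rightarrow> complex \<Rightarrow> complex \<Rightarrow> complex \<Rightarrow> bool" where
  "Hq_iso q m n d l \<theta> m' n' d' l' \<theta>' =
     (let V = eig_space q m n d l \<theta>; W = eig_space q m' n' d' l' \<theta>' in
      \<exists>f. bij_betw f V W
        \<and> (\<forall>u\<in>V. \<forall>w\<in>V. f (vadd u w) = vadd (f u) (f w))
        \<and> (\<forall>a. \<forall>u\<in>V. f (vsmul a u) = vsmul a (f u))
        \<and> (\<forall>u\<in>V. f (actA q m n d l u) = actA q m' n' d' l' (f u))
        \<and> (\<forall>u\<in>V. f (actB q m n d l u) = actB q m' n' d' l' (f u))
        \<and> (\<forall>u\<in>V. f (actC q m n d l u) = actC q m' n' d' l' (f u)))"

end

theory Submission
  imports Defs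
begin

text \<open>For \<open>\<theta> = \<delta> q^(m+n-2k)\<close> the weight space \<open>V(\<theta>)\<close> is spanned by the \<open>v_i \<otimes> v_j\<close> with
\<open>i + j = k\<close>, that is, by the columns \<open>j\<close> from \<open>k - m\<close> to \<open>min n k\<close>. There \<open>A\<close> is diagonal with
eigenvalues \<open>\<delta>\<lambda>q^(2j-n)\<close>, while \<open>B\<close> and \<open>C\<close> are tridiagonal in \<open>j\<close>. Rescaling the basis along the
antidiagonal therefore yields an isomorphism as soon as the diagonal entries agree and the off-diagonal
entries agree up to that rescaling; this happens for the exchanges \<open>(m,n,k) \<mapsto> (m+n-k,k,n)\<close> and
\<open>(m,n,k) \<mapsto> (k,m+n-k,m)\<close>, whose composite is the fourth listed case.

Conversely, an isomorphism preserves the spectrum of \<open>A\<close>, a \<open>q\<^sup>2\<close>-progression, hence its first term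
and its length, and it maps the lowest \<open>A\<close>-eigenvector to the lowest one. On that vector \<open>B\<close> and \<open>C\<close>
act by their diagonal entry plus a vector of the next \<open>A\<close>-eigenspace, so these diagonal entries are
invariants too. Written in terms of \<open>m+n\<close>, \<open>|m-k|\<close> and \<open>|k-n|\<close>, the four invariants determine \<open>\<delta>\<close>,
these three numbers and \<open>\<lambda>\<close>, which leaves exactly the four listed cases.\<close>

section \<open>Arithmetic of a generic \<open>q\<close>\<close>

definition not_root_of_unity :: "complex \<Rightarrow> bool" where
  "not_root_of_unity q \<longleftrightarrow> q \<noteq> 0 \<and> (\<forall>r::nat. 0 < r \<longrightarrow> q ^ r \<noteq> 1)"

lemma qnum_0 [simp]: "qnum q 0 = 0"
  by (simp add: qnum_def)

definition qfact :: "complex \<Rightarrow> nat \<Rightarrow> complex" where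
  "qfact q r = (\<Prod>t<r. qnum q (Suc t))"

lemma qfact_Suc: "qfact q (Suc r) = qfact q r * qnum q (Suc r)"
  by (simp add: qfact_def)

lemma powi_mult_2: "(q::complex) powi (x * 2) = (q powi x)^2"
  by (metis power_int_power' of_nat_numeral)

lemmas powi_split = power_int_add power_int_diff power_int_minus powi_mult_2 of_nat_add of_nat_Suc

context
  fixes q :: complex
  assumes q: "not_root_of_unity q"
begin

lemma q_nonzero: "q \<noteq> 0"
  using q by (simp add: not_root_of_unity_def)

lemma powi_eq_1_iff: "q powi a = 1 \<longleftrightarrow> a = 0"
proof
  assume a: "q powi a = 1"
  have "q ^ nat \<bar>a\<bar> = 1"
  proof (cases "a \<ge> 0")
    case True
    then show ?thesis using a by (simp add: power_int_def)
  next
    case False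
    then have "inverse q ^ nat (-a) = 1" using a by (simp add: power_int_def)
    then show ?thesis using False by (simp add: power_inverse)
  qed
  then show "a = 0"
    using q unfolding not_root_of_unity_def by (metis zero_less_abs_iff zero_less_nat_eq)
qed simp

lemma powi_eq_iff: "q powi a = q powi b \<longleftrightarrow> a = b"
proof
  assume "q powi a = q powi b"
  then have "q powi (a - b) = 1" using q_nonzero by (simp add: power_int_diff)
  then show "a = b" by (simp add: powi_eq_1_iff)
qed simp

lemma powi_neq_uminus: "q powi a \<noteq> - (q powi b)"
proof
  assume h: "q powi a = - (q powi b)"
  then have "q powi (a * 2) = q powi (b * 2)" by (simp add: powi_mult_2)
  then have "a = b" by (simp add: powi_eq_iff)
  then show False using h q_nonzero by simp
qed

lemma sign_powi_eq_iff:
  assumes "d \<in> {1, -1}" and "d' \<in> {1, -1}"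
  shows "d * q powi a = d' * q powi b \<longleftrightarrow> d = d' \<and> a = b"
  using assms powi_neq_uminus[of a b] powi_neq_uminus[of b a] by (auto simp: powi_eq_iff)

lemma powi_cross:
  assumes "x \<noteq> 0" "x' \<noteq> 0" "x * q powi a = x' * q powi b" "x' * q powi c = x * q powi e"
  shows "a + c = b + e"
proof -
  have "(x * q powi a) * (x' * q powi c) = (x' * q powi b) * (x * q powi e)"
    using assms(3,4) by simp
  then have "(x * x') * q powi (a + c) = (x * x') * q powi (b + e)"
    using q_nonzero by (simp add: power_int_add mult_ac)
  then show ?thesis using assms(1,2) by (simp add: powi_eq_iff)
qed

lemma powi_sum_eq:
  assumes "q powi a + q powi b = q powi a' + q powi b'" and "a + b = a' + b'"
  shows "(a = a' \<and> b = b') \<or> (a = b' \<and> b = a')"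
proof -
  let ?x = "q powi a" and ?x' = "q powi a'" and ?y = "q powi b" and ?y' = "q powi b'"
  have xy: "?x * ?y = ?x' * ?y'" using assms(2) q_nonzero by (metis power_int_add)
  have "(?x - ?x') * (?x - ?y') = ?x * (?x + ?y - ?x' - ?y')"
    by (simp add: algebra_simps flip: xy)
  also have "\<dots> = 0" using assms(1) by simp
  finally have "a = a' \<or> a = b'" by (simp add: powi_eq_iff)
  then show ?thesis using assms(2) by auto
qed

lemma q_minus_inverse_nonzero: "q - inverse q \<noteq> 0"
proof
  assume "q - inverse q = 0"
  then have "q ^ 2 = 1" using q_nonzero by (simp add: field_simps power2_eq_square)
  then show False using q by (simp add: not_root_of_unity_def)
qed

lemma qnum_nonzero: "0 < k \<Longrightarrow> qnum q k \<noteq> 0"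
proof
  assume k: "0 < k" and "qnum q k = 0"
  then have "q ^ k - inverse q ^ k = 0" using q_minus_inverse_nonzero by (simp add: qnum_def)
  then have "q ^ (2 * k) = 1"
    using q_nonzero by (simp add: field_simps power_inverse power_mult power2_eq_square)
  then show False using q k by (simp add: not_root_of_unity_def)
qed

lemma qfact_nonzero: "qfact q r \<noteq> 0"
  by (simp add: qfact_def qnum_nonzero)

end

section \<open>The actions of \<open>A\<close>, \<open>B\<close>, \<open>C\<close> on a weight space\<close>

definition tridiag :: "(nat \<Rightarrow> nat \<Rightarrow> complex) \<Rightarrow> (nat \<Rightarrow> nat \<Rightarrow> complex) \<Rightarrow> (nat \<Rightarrow> nat \<Rightarrow> complex)
    \<Rightarrow> vec \<Rightarrow> vec" where
  "tridiag D L U c = (\<lambda>i j. D i j * c i j + L i j * c (i + 1) (j - 1) + U i j * c (i - 1) (j + 1))"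

definition band_supported :: "nat \<Rightarrow> nat \<Rightarrow> (nat \<Rightarrow> nat \<Rightarrow> complex) \<Rightarrow> (nat \<Rightarrow> nat \<Rightarrow> complex) \<Rightarrow> bool" where
  "band_supported m n L U \<longleftrightarrow>
     (\<forall>i j. L i j \<noteq> 0 \<longrightarrow> i < m \<and> 0 < j \<and> j \<le> n) \<and> (\<forall>i j. U i j \<noteq> 0 \<longrightarrow> 0 < i \<and> i \<le> m \<and> j < n)"

definition A_eigval :: "complex \<Rightarrow> nat \<Rightarrow> complex \<Rightarrow> complex \<Rightarrow> nat \<Rightarrow> complex" where
  "A_eigval q n d l j = d * l * q powi (2 * int j - int n)"

definition C_diag :: "complex \<Rightarrow> nat \<Rightarrow> nat \<Rightarrow> complex \<Rightarrow> complex \<Rightarrow> nat \<Rightarrow> nat \<Rightarrow> complex" where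
  "C_diag q m n d l i j = l^2 * inverse (l * q powi (int m - 2 * int i))"

definition C_sub :: "complex \<Rightarrow> nat \<Rightarrow> nat \<Rightarrow> complex \<Rightarrow> complex \<Rightarrow> nat \<Rightarrow> nat \<Rightarrow> complex" where
  "C_sub q m n d l i j = (if i < m \<and> 0 < j \<and> j \<le> n then
     - q * (q - inverse q)^2 * (l * qnum q (i + 1) * qnum q (m - i) *
        inverse (d * inverse l * q powi (int n - 2 * int (j - 1)))) else 0)"

definition B_diag :: "complex \<Rightarrow> nat \<Rightarrow> nat \<Rightarrow> complex \<Rightarrow> complex \<Rightarrow> nat \<Rightarrow> nat \<Rightarrow> complex" where
  "B_diag q m n d l i j = (q - inverse q)^2 *
      ((if i < m then l * qnum q (i + 1) * qnum q (m - i) * (d * inverse l * q powi (int n - 2 * int j)) else 0)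
     + (if j < n then inverse (l * q powi (int m - 2 * int i)) * (d * l * qnum q (j + 1) * qnum q (n - j)) else 0))
     + inverse q * (l * q powi (int m - 2 * int i) * (d * inverse l * q powi (int n - 2 * int j)))
     + q * (inverse (l * q powi (int m - 2 * int i)) * inverse (d * inverse l * q powi (int n - 2 * int j)))"

definition B_sub :: "complex \<Rightarrow> nat \<Rightarrow> nat \<Rightarrow> complex \<Rightarrow> complex \<Rightarrow> nat \<Rightarrow> nat \<Rightarrow> complex" where
  "B_sub q m n d l i j =
     (if i < m \<and> 0 < j \<and> j \<le> n then (q - inverse q)^2 * (l * qnum q (i + 1) * qnum q (m - i)) else 0)"

definition B_super :: "complex \<Rightarrow> nat \<Rightarrow> nat \<Rightarrow> complex \<Rightarrow> complex \<Rightarrow> nat \<Rightarrow> nat \<Rightarrow> complex" where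
  "B_super q m n d l i j = (if j < n \<and> 0 < i \<and> i \<le> m then (q - inverse q)^2 *
      (inverse (l * q powi (int m - 2 * int i)) * (d * l * qnum q (j + 1) * qnum q (n - j)) *
       (d * inverse l * q powi (int n - 2 * int (j + 1)))) else 0)"

lemma actA_eq_tridiag:
  assumes "d \<in> {1, -1}"
  shows "actA q m n d l = tridiag (\<lambda>_ j. A_eigval q n d l j) (\<lambda>_ _. 0) (\<lambda>_ _. 0)"
proof -
  have "inverse (d * inverse l * q powi (int n - 2 * int j)) = A_eigval q n d l j" for j
    using assms by (auto simp: A_eigval_def power_int_minus[symmetric])
  then show ?thesis by (simp add: fun_eq_iff actA_def opK2inv_def tridiag_def)
qed

lemma actB_eq_tridiag:
  "actB q m n d l = tridiag (B_diag q m n d l) (B_sub q m n d l) (B_super q m n d l)"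
  by (simp add: fun_eq_iff actB_def opE1_def opE2_def opF1_def opF2_def opK1_def opK2_def opK1inv_def
      opK2inv_def vadd_def vsmul_def Let_def tridiag_def B_diag_def B_sub_def B_super_def algebra_simps)

lemma actC_eq_tridiag: "actC q m n d l = tridiag (C_diag q m n d l) (C_sub q m n d l) (\<lambda>_ _. 0)"
  by (simp add: fun_eq_iff actC_def opI_def opK1inv_def opE1_def opF2_def opK2inv_def vadd_def vsmul_def
      tridiag_def C_diag_def C_sub_def)

lemma band_supported_A: "band_supported m n (\<lambda>_ _. 0) (\<lambda>_ _. 0)"
  by (simp add: band_supported_def)

lemma band_supported_B: "band_supported m n (B_sub q m n d l) (B_super q m n d l)"
  by (simp add: band_supported_def B_sub_def B_super_def)

lemma band_supported_C: "band_supported m n (C_sub q m n d l) (\<lambda>_ _. 0)"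
  by (simp add: band_supported_def C_sub_def)

definition on_antidiag :: "nat \<Rightarrow> nat \<Rightarrow> nat \<Rightarrow> nat \<Rightarrow> nat \<Rightarrow> bool" where
  "on_antidiag m n k i j \<longleftrightarrow> i + j = k \<and> i \<le> m \<and> j \<le> n"

definition antidiag :: "nat \<Rightarrow> nat \<Rightarrow> nat \<Rightarrow> vec set" where
  "antidiag m n k = {c. \<forall>i j. \<not> on_antidiag m n k i j \<longrightarrow> c i j = 0}"

lemma on_antidiag_iff: "on_antidiag m n k i j \<longleftrightarrow> i = k - j \<and> k - m \<le> j \<and> j \<le> min n k"
  by (auto simp: on_antidiag_def)

lemma antidiag_zero: "c \<in> antidiag m n k \<Longrightarrow> \<not> on_antidiag m n k i j \<Longrightarrow> c i j = 0"
  by (simp add: antidiag_def)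

lemma tridiag_antidiag:
  assumes "band_supported m n L U" and "u \<in> antidiag m n k"
  shows "tridiag D L U u \<in> antidiag m n k"
  unfolding antidiag_def
proof (intro CollectI allI impI)
  fix i j assume off: "\<not> on_antidiag m n k i j"
  have "L i j * u (i + 1) (j - 1) = 0" and "U i j * u (i - 1) (j + 1) = 0"
    using assms off by (fastforce simp: band_supported_def antidiag_def on_antidiag_def)+
  moreover have "u i j = 0" using assms(2) off by (rule antidiag_zero)
  ultimately show "tridiag D L U u i j = 0" by (auto simp: tridiag_def)
qed

lemma eig_space_eq_antidiag:
  assumes q: "not_root_of_unity q" and "d \<in> {1, -1}" and "l \<noteq> 0"
  shows "eig_space q m n d l (d * q powi (int m + int n - 2 * int k)) = antidiag m n k"
proof -
  have q0: "q \<noteq> 0" using q_nonzero[OF q] .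
  have K1K2: "opK1 q m n d l (opK2 q m n d l c) i j = d * q powi (int m + int n - 2 * int (i + j)) * c i j"
    for c i j using assms(3) q0 by (simp add: opK1_def opK2_def powi_split field_simps)
  have "d * q powi (int m + int n - 2 * int (i + j)) * x = d * q powi (int m + int n - 2 * int k) * x
      \<longleftrightarrow> x = 0 \<or> i + j = k" for i j x
    using assms(2) sign_powi_eq_iff[OF q assms(2,2)] by auto
  then show ?thesis
    by (auto simp: eig_space_def antidiag_def tens_space_def on_antidiag_def vsmul_def fun_eq_iff K1K2)
qed

section \<open>Isomorphisms by rescaling along the antidiagonal\<close>

text \<open>The \<open>t\<close>-th point of the antidiagonal \<open>i + j = k\<close> of \<open>[0,m] \<times> [0,n]\<close>, counted from the lowest
column \<open>j = k - m\<close>; it has \<open>antidiag_span m n k + 1\<close> points.\<close>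

definition antidiag_at :: "nat \<Rightarrow> nat \<Rightarrow> (nat \<Rightarrow> nat \<Rightarrow> 'a) \<Rightarrow> nat \<Rightarrow> 'a" where
  "antidiag_at m k F t = F (k - (k - m + t)) (k - m + t)"

lemma antidiag_at_zero [simp]: "antidiag_at m k (\<lambda>_ _. 0) t = 0"
  by (simp add: antidiag_at_def)

definition antidiag_span :: "nat \<Rightarrow> nat \<Rightarrow> nat \<Rightarrow> nat" where
  "antidiag_span m n k = min n k - (k - m)"

lemma on_antidiag_at:
  "k \<le> m + n \<Longrightarrow> t \<le> antidiag_span m n k \<Longrightarrow> on_antidiag m n k (k - (k - m + t)) (k - m + t)"
  by (auto simp: on_antidiag_def antidiag_span_def)

lemma on_antidiag_obtain:
  assumes "on_antidiag m n k i j"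
  obtains t where "t \<le> antidiag_span m n k" "i = k - (k - m + t)" "j = k - m + t"
  using assms by (intro that[of "j - (k - m)"]) (auto simp: on_antidiag_def antidiag_span_def)

lemma band_supported_sub_first: "band_supported m n L U \<Longrightarrow> antidiag_at m k L 0 = 0"
  by (cases "k \<le> m") (auto simp: band_supported_def antidiag_at_def)

lemma band_supported_super_last:
  "band_supported m n L U \<Longrightarrow> k \<le> m + n \<Longrightarrow> antidiag_at m k U (antidiag_span m n k) = 0"
  by (cases "n \<le> k") (auto simp: band_supported_def antidiag_at_def antidiag_span_def)

definition relabel :: "nat \<Rightarrow> nat \<Rightarrow> nat \<Rightarrow> nat \<Rightarrow> nat \<Rightarrow> (nat \<Rightarrow> complex) \<Rightarrow> vec \<Rightarrow> vec" where
  "relabel m k m' n' k' \<alpha> c = (\<lambda>i j. if on_antidiag m' n' k' i j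
      then \<alpha> (j - (k' - m')) * antidiag_at m k c (j - (k' - m')) else 0)"

lemma relabel_at:
  "k' \<le> m' + n' \<Longrightarrow> t \<le> antidiag_span m' n' k' \<Longrightarrow>
    antidiag_at m' k' (relabel m k m' n' k' \<alpha> c) t = \<alpha> t * antidiag_at m k c t"
  using on_antidiag_at[of k' m' n' t] by (simp add: relabel_def antidiag_at_def)

lemma relabel_antidiag: "relabel m k m' n' k' \<alpha> c \<in> antidiag m' n' k'"
  by (simp add: relabel_def antidiag_def)

lemma relabel_vadd: "relabel m k m' n' k' \<alpha> (vadd u w) = vadd (relabel m k m' n' k' \<alpha> u) (relabel m k m' n' k' \<alpha> w)"
  by (simp add: fun_eq_iff relabel_def antidiag_at_def vadd_def algebra_simps)

lemma relabel_vsmul: "relabel m k m' n' k' \<alpha> (vsmul a u) = vsmul a (relabel m k m' n' k' \<alpha> u)"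
  by (simp add: fun_eq_iff relabel_def antidiag_at_def vsmul_def algebra_simps)

lemma antidiag_eqI:
  assumes "u \<in> antidiag m n k" "w \<in> antidiag m n k"
    and "\<And>t. t \<le> antidiag_span m n k \<Longrightarrow> antidiag_at m k u t = antidiag_at m k w t"
  shows "u = w"
proof (intro ext)
  fix i j
  show "u i j = w i j"
  proof (cases "on_antidiag m n k i j")
    case True
    then show ?thesis by (elim on_antidiag_obtain) (use assms(3) in \<open>simp add: antidiag_at_def\<close>)
  qed (metis assms(1,2) antidiag_zero)
qed

lemma relabel_inverse:
  assumes "k \<le> m + n" "k' \<le> m' + n'" and "antidiag_span m n k = antidiag_span m' n' k'"
    and "\<And>t. t \<le> antidiag_span m n k \<Longrightarrow> \<alpha> t \<noteq> 0" and "c \<in> antidiag m n k"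
  shows "relabel m' k' m n k (\<lambda>t. inverse (\<alpha> t)) (relabel m k m' n' k' \<alpha> c) = c"
  by (rule antidiag_eqI[OF relabel_antidiag assms(5)]) (simp add: assms relabel_at)

lemma bij_betw_relabel:
  assumes "k \<le> m + n" "k' \<le> m' + n'" and "antidiag_span m n k = antidiag_span m' n' k'"
    and "\<And>t. t \<le> antidiag_span m n k \<Longrightarrow> \<alpha> t \<noteq> 0"
  shows "bij_betw (relabel m k m' n' k' \<alpha>) (antidiag m n k) (antidiag m' n' k')"
proof (rule bij_betw_byWitness[where f' = "relabel m' k' m n k (\<lambda>t. inverse (\<alpha> t))"])
  show "\<forall>w\<in>antidiag m' n' k'. relabel m k m' n' k' \<alpha> (relabel m' k' m n k (\<lambda>t. inverse (\<alpha> t)) w) = w"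
    using relabel_inverse[of k' m' n' k m n "\<lambda>t. inverse (\<alpha> t)"] assms by simp
qed (use assms relabel_inverse relabel_antidiag in auto)

lemma tridiag_at:
  assumes km: "k \<le> m + n" and t: "t \<le> antidiag_span m n k" and supp: "band_supported m n L U"
  shows "antidiag_at m k (tridiag D L U u) t = antidiag_at m k D t * antidiag_at m k u t
    + (if t = 0 then 0 else antidiag_at m k L t * antidiag_at m k u (t - 1))
    + (if t = antidiag_span m n k then 0 else antidiag_at m k U t * antidiag_at m k u (t + 1))"
proof -
  have sub: "antidiag_at m k (\<lambda>i j. L i j * u (i + 1) (j - 1)) t
      = (if t = 0 then 0 else antidiag_at m k L t * antidiag_at m k u (t - 1))"
    using band_supported_sub_first[OF supp] t km
    by (cases t) (auto simp: antidiag_at_def antidiag_span_def Suc_diff_Suc)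
  have super: "antidiag_at m k (\<lambda>i j. U i j * u (i - 1) (j + 1)) t
      = (if t = antidiag_span m n k then 0 else antidiag_at m k U t * antidiag_at m k u (t + 1))"
    using band_supported_super_last[OF supp km] t km
    by (auto simp: antidiag_at_def antidiag_span_def)
  show ?thesis using sub super by (simp add: tridiag_def antidiag_at_def)
qed

lemma tridiag_relabel:
  assumes km: "k \<le> m + n" and km': "k' \<le> m' + n'"
    and span: "antidiag_span m n k = antidiag_span m' n' k'"
    and supp: "band_supported m n L U" and supp': "band_supported m' n' L' U'"
    and diag: "\<And>t. t \<le> antidiag_span m n k \<Longrightarrow> antidiag_at m k D t = antidiag_at m' k' D' t"
    and sub: "\<And>t. t < antidiag_span m n k \<Longrightarrow>
      \<alpha> (Suc t) * antidiag_at m k L (Suc t) = antidiag_at m' k' L' (Suc t) * \<alpha> t"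
    and super: "\<And>t. t < antidiag_span m n k \<Longrightarrow>
      \<alpha> t * antidiag_at m k U t = antidiag_at m' k' U' t * \<alpha> (Suc t)"
    and u: "u \<in> antidiag m n k"
  shows "relabel m k m' n' k' \<alpha> (tridiag D L U u) = tridiag D' L' U' (relabel m k m' n' k' \<alpha> u)"
proof (rule antidiag_eqI[OF relabel_antidiag tridiag_antidiag[OF supp' relabel_antidiag]])
  fix t assume t': "t \<le> antidiag_span m' n' k'"
  then have t: "t \<le> antidiag_span m n k" using span by simp
  have sub_term: "\<alpha> t * (if t = 0 then 0 else antidiag_at m k L t * antidiag_at m k u (t - 1))
      = (if t = 0 then 0 else antidiag_at m' k' L' t * (\<alpha> (t - 1) * antidiag_at m k u (t - 1)))"
    using sub[of "t - 1"] t by (cases t) simp_all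
  have super_term: "\<alpha> t * (if t = antidiag_span m n k then 0 else antidiag_at m k U t * antidiag_at m k u (t + 1))
      = (if t = antidiag_span m n k then 0
         else antidiag_at m' k' U' t * (\<alpha> (t + 1) * antidiag_at m k u (t + 1)))"
    using super[of t] t by auto
  have "antidiag_at m' k' (relabel m k m' n' k' \<alpha> (tridiag D L U u)) t
      = \<alpha> t * antidiag_at m k (tridiag D L U u) t"
    using relabel_at[OF km' t'] .
  also have "\<dots> = antidiag_at m' k' D' t * (\<alpha> t * antidiag_at m k u t)
        + (if t = 0 then 0 else antidiag_at m' k' L' t * (\<alpha> (t - 1) * antidiag_at m k u (t - 1)))
        + (if t = antidiag_span m n k then 0
           else antidiag_at m' k' U' t * (\<alpha> (t + 1) * antidiag_at m k u (t + 1)))"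
    unfolding tridiag_at[OF km t supp] distrib_left sub_term super_term diag[OF t] by simp
  also have "\<dots> = antidiag_at m' k' (tridiag D' L' U' (relabel m k m' n' k' \<alpha> u)) t"
    using t' span by (simp add: tridiag_at[OF km' t' supp'] relabel_at[OF km'])
  finally show "antidiag_at m' k' (relabel m k m' n' k' \<alpha> (tridiag D L U u)) t
      = antidiag_at m' k' (tridiag D' L' U' (relabel m k m' n' k' \<alpha> u)) t" .
qed

lemma C_sub_eq_B_sub:
  assumes "d \<in> {1, -1}"
  shows "C_sub q m n d l i j = - q * A_eigval q n d l (j - 1) * B_sub q m n d l i j"
  using assms by (auto simp: C_sub_def B_sub_def A_eigval_def power_int_minus[symmetric])

text \<open>No hypothesis on \<open>C_sub\<close> is needed: by \<open>C_sub_eq_B_sub\<close> it follows from those on \<open>A\<close> and \<open>B_sub\<close>.\<close>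

lemma Hq_iso_by_relabel:
  assumes q: "not_root_of_unity q" and d: "d \<in> {1, -1}" and d': "d' \<in> {1, -1}"
    and l: "l \<noteq> 0" and l': "l' \<noteq> 0" and km: "k \<le> m + n" and km': "k' \<le> m' + n'"
    and span: "antidiag_span m n k = antidiag_span m' n' k'"
    and \<alpha>: "\<And>t. t \<le> antidiag_span m n k \<Longrightarrow> \<alpha> t \<noteq> 0"
    and A: "\<And>t. t \<le> antidiag_span m n k \<Longrightarrow> A_eigval q n d l (k - m + t) = A_eigval q n' d' l' (k' - m' + t)"
    and B: "\<And>t. t \<le> antidiag_span m n k \<Longrightarrow>
      antidiag_at m k (B_diag q m n d l) t = antidiag_at m' k' (B_diag q m' n' d' l') t"
    and C: "\<And>t. t \<le> antidiag_span m n k \<Longrightarrow>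
      antidiag_at m k (C_diag q m n d l) t = antidiag_at m' k' (C_diag q m' n' d' l') t"
    and B_sub: "\<And>t. t < antidiag_span m n k \<Longrightarrow>
      \<alpha> (Suc t) * antidiag_at m k (B_sub q m n d l) (Suc t) = antidiag_at m' k' (B_sub q m' n' d' l') (Suc t) * \<alpha> t"
    and B_super: "\<And>t. t < antidiag_span m n k \<Longrightarrow>
      \<alpha> t * antidiag_at m k (B_super q m n d l) t = antidiag_at m' k' (B_super q m' n' d' l') t * \<alpha> (Suc t)"
  shows "Hq_iso q m n d l (d * q powi (int m + int n - 2 * int k))
    m' n' d' l' (d' * q powi (int m' + int n' - 2 * int k'))"
proof -
  let ?f = "relabel m k m' n' k' \<alpha>"
  have A_at: "antidiag_at m k (\<lambda>_. A_eigval q n d l) t = antidiag_at m' k' (\<lambda>_. A_eigval q n' d' l') t"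
    if "t \<le> antidiag_span m n k" for t
    using A[OF that] by (simp add: antidiag_at_def)
  have C_sub: "\<alpha> (Suc t) * antidiag_at m k (C_sub q m n d l) (Suc t)
      = antidiag_at m' k' (C_sub q m' n' d' l') (Suc t) * \<alpha> t" if "t < antidiag_span m n k" for t
  proof -
    have "antidiag_at m k (C_sub q m n d l) (Suc t)
        = - q * A_eigval q n d l (k - m + t) * antidiag_at m k (B_sub q m n d l) (Suc t)"
      and "antidiag_at m' k' (C_sub q m' n' d' l') (Suc t)
        = - q * A_eigval q n' d' l' (k' - m' + t) * antidiag_at m' k' (B_sub q m' n' d' l') (Suc t)"
      by (simp_all add: C_sub_eq_B_sub[OF d] C_sub_eq_B_sub[OF d'] antidiag_at_def)
    then show ?thesis using B_sub[OF that] A[of t] that by (simp add: algebra_simps)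
  qed
  have "?f (actA q m n d l u) = actA q m' n' d' l' (?f u)" if "u \<in> antidiag m n k" for u
    unfolding actA_eq_tridiag[OF d] actA_eq_tridiag[OF d']
    by (rule tridiag_relabel[OF km km' span band_supported_A band_supported_A A_at _ _ that]) simp_all
  moreover have "?f (actB q m n d l u) = actB q m' n' d' l' (?f u)" if "u \<in> antidiag m n k" for u
    unfolding actB_eq_tridiag
    by (rule tridiag_relabel[OF km km' span band_supported_B band_supported_B B B_sub B_super that])
  moreover have "?f (actC q m n d l u) = actC q m' n' d' l' (?f u)" if "u \<in> antidiag m n k" for u
    unfolding actC_eq_tridiag
    by (rule tridiag_relabel[OF km km' span band_supported_C band_supported_C C C_sub _ that]) simp_all
  ultimately show ?thesis
    unfolding Hq_iso_def Let_def eig_space_eq_antidiag[OF q d l] eig_space_eq_antidiag[OF q d' l']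
    using bij_betw_relabel[where \<alpha> = \<alpha>, OF km km' span \<alpha>] relabel_vadd relabel_vsmul by blast
qed

section \<open>The listed parameters give isomorphic modules\<close>

lemma C_diag_eq:
  assumes "l \<noteq> 0" shows "C_diag q m n d l i j = l * q powi (2 * int i - int m)"
  using assms by (simp add: C_diag_def power_int_minus[symmetric] power2_eq_square)

lemma B_diag_closed:
  assumes q: "not_root_of_unity q" and l: "l \<noteq> 0" and d: "d \<in> {1, -1}" and "i \<le> m" and "j \<le> n"
  shows "B_diag q m n d l i j = d * (q powi (int m + int n + 1 - 2 * int j) + q powi (int n - int m - 1 - 2 * int j)
     + q powi (int n - int m + 1 + 2 * int i) + q powi (2 * int i - int m - int n - 1)
     - q powi (int n - int m + 2 * int i - 2 * int j + 1) - q powi (int n - int m + 2 * int i - 2 * int j - 1))"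
proof -
  have q0: "q \<noteq> 0" using q_nonzero[OF q] .
  have qnum: "(q - inverse q) * qnum q z = q ^ z - inverse q ^ z" for z
    using q_minus_inverse_nonzero[OF q] by (simp add: qnum_def)
  obtain a b where m: "m = i + a" and n: "n = j + b" using assms(4,5) le_Suc_ex by blast
  let ?X = "d * inverse l * q powi (int n - 2 * int j)"
  let ?Y = "inverse (l * q powi (int m - 2 * int i))"
  have "B_diag q m n d l i j
      = l * ?X * ((q - inverse q) * qnum q (i + 1)) * ((q - inverse q) * qnum q (m - i))
      + ?Y * d * l * ((q - inverse q) * qnum q (j + 1)) * ((q - inverse q) * qnum q (n - j))
      + inverse q * (l * q powi (int m - 2 * int i) * ?X) + q * (?Y * inverse ?X)"
    using assms(4,5) unfolding B_diag_def
    by (cases "i < m"; cases "j < n") (auto simp: power2_eq_square algebra_simps)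
  also have "\<dots> = l * ?X * (q ^ (i + 1) - inverse q ^ (i + 1)) * (q ^ a - inverse q ^ a)
      + ?Y * d * l * (q ^ (j + 1) - inverse q ^ (j + 1)) * (q ^ b - inverse q ^ b)
      + inverse q * (l * q powi (int m - 2 * int i) * ?X) + q * (?Y * inverse ?X)"
    by (simp only: qnum m n add_diff_cancel_left')
  finally have B: "B_diag q m n d l i j = \<dots>" .
  show ?thesis
    unfolding B unfolding m n using q0 l d by (auto simp: powi_split field_simps power2_eq_square)
qed

lemma antidiag_at_exchange_n_k:
  "k \<le> m + n \<Longrightarrow> antidiag_at (m + n - k) n G t = G (n - (k - m + t)) (k - m + t)"
  by (simp add: antidiag_at_def diff_diff_right)

lemma antidiag_span_exchange_n_k: "k \<le> m + n \<Longrightarrow> antidiag_span (m + n - k) k n = antidiag_span m n k"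
  by (auto simp: antidiag_span_def)

lemma Hq_iso_exchange_n_k:
  assumes q: "not_root_of_unity q" and l: "l \<noteq> 0" and d: "d \<in> {1, -1}" and km: "k \<le> m + n"
  shows "Hq_iso q m n d l (d * q powi (int m + int n - 2 * int k))
    (m + n - k) k d (l * q powi (int k - int n)) (d * q powi (int (m + n - k) + int k - 2 * int n))"
proof -
  have q0: "q \<noteq> 0" using q_nonzero[OF q] .
  \<comment> \<open>\<open>\<beta> j / \<beta> (j - 1) = q^(k-n) [n-j+1] / [k-j+1]\<close> matches the sub-diagonal entries of \<open>B\<close>\<close>
  define \<beta> where "\<beta> j = (q powi (int k - int n)) ^ j * qfact q (k - j) / qfact q (n - j)" for j
  let ?l' = "l * q powi (int k - int n)"
  show ?thesis
  proof (rule Hq_iso_by_relabel[where \<alpha> = "\<lambda>t. \<beta> (k - m + t)", OF q d d l _ km];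
      (unfold antidiag_at_exchange_n_k[OF km] antidiag_span_exchange_n_k[OF km])?; (unfold antidiag_at_def)?)
    show "?l' \<noteq> 0" using l q0 by simp
    show "n \<le> m + n - k + k" using km by simp
    fix t assume t: "t \<le> antidiag_span m n k"
    define j where "j = k - m + t"
    have j: "j \<le> k" "j \<le> n" "k - j \<le> m" using t km by (auto simp: j_def antidiag_span_def)
    define a b c where "a = k - j" and "b = n - j" and "c = m - a"
    have s: "k = j + a" "n = j + b" "m = a + c" using j by (auto simp: a_def b_def c_def)
    show "\<beta> (k - m + t) \<noteq> 0"
      using q0 by (simp add: \<beta>_def qfact_nonzero[OF q])
    show "A_eigval q n d l (k - m + t) = A_eigval q k d ?l' (n - (m + n - k) + t)"
      using km q0 by (simp add: A_eigval_def diff_diff_right powi_split field_simps)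
    have j': "n - j \<le> m + n - k" "j \<le> k" using j by auto
    show "B_diag q m n d l (k - (k - m + t)) (k - m + t) = B_diag q (m + n - k) k d ?l' (n - (k - m + t)) (k - m + t)"
      unfolding j_def[symmetric] B_diag_closed[OF q l d j(3,2)] B_diag_closed[OF q \<open>?l' \<noteq> 0\<close> d j']
      unfolding s by (simp add: algebra_simps)
    show "C_diag q m n d l (k - (k - m + t)) (k - m + t) = C_diag q (m + n - k) k d ?l' (n - (k - m + t)) (k - m + t)"
      unfolding j_def[symmetric] C_diag_eq[OF l] C_diag_eq[OF \<open>?l' \<noteq> 0\<close>] unfolding s
      using q0 by (simp add: powi_split field_simps)
  next
    fix t assume t: "t < antidiag_span m n k"
    define j where "j = k - m + t"
    have j: "j < k" "j < n" "k - j \<le> m" using t km by (auto simp: j_def antidiag_span_def)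
    define a b c where "a = k - Suc j" and "b = n - Suc j" and "c = m - Suc a"
    have s: "k = Suc (j + a)" "n = Suc (j + b)" "m = Suc (a + c)" using j by (auto simp: a_def b_def c_def)
    have nz: "qfact q a \<noteq> 0" "qfact q b \<noteq> 0" "qnum q (Suc a) \<noteq> 0" "qnum q (Suc b) \<noteq> 0"
      using qfact_nonzero[OF q] qnum_nonzero[OF q] by auto
    show "\<beta> (k - m + Suc t) * B_sub q m n d l (k - (k - m + Suc t)) (k - m + Suc t)
        = B_sub q (m + n - k) k d ?l' (n - (k - m + Suc t)) (k - m + Suc t) * \<beta> (k - m + t)"
      unfolding add_Suc_right j_def[symmetric] \<beta>_def B_sub_def unfolding s
      using nz q0 l by (auto simp: powi_split qfact_Suc field_simps)
    show "\<beta> (k - m + t) * B_super q m n d l (k - (k - m + t)) (k - m + t)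
        = B_super q (m + n - k) k d ?l' (n - (k - m + t)) (k - m + t) * \<beta> (k - m + Suc t)"
      unfolding add_Suc_right j_def[symmetric] \<beta>_def B_super_def unfolding s
      using nz q0 l d by (auto simp: powi_split qfact_Suc field_simps)
  qed (simp_all add: antidiag_span_def)
qed

lemma antidiag_span_exchange_m_k: "k \<le> m + n \<Longrightarrow> antidiag_span k (m + n - k) m = antidiag_span m n k"
  by (auto simp: antidiag_span_def)

lemma Hq_iso_exchange_m_k:
  assumes q: "not_root_of_unity q" and l: "l \<noteq> 0" and d: "d \<in> {1, -1}" and km: "k \<le> m + n"
  shows "Hq_iso q m n d l (d * q powi (int m + int n - 2 * int k))
    k (m + n - k) d (l * q powi (int k - int m)) (d * q powi (int k + int (m + n - k) - 2 * int m))"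
proof -
  have q0: "q \<noteq> 0" using q_nonzero[OF q] .
  define \<alpha> where "\<alpha> t = (q powi (int k - int m)) ^ (m - k + t) * qfact q (k - m + t) / qfact q (m - k + t)" for t
  let ?l' = "l * q powi (int k - int m)"
  show ?thesis
  proof (rule Hq_iso_by_relabel[where \<alpha> = \<alpha>, OF q d d l _ km];
      (unfold antidiag_span_exchange_m_k[OF km])?; (unfold antidiag_at_def)?)
    show "?l' \<noteq> 0" using l q0 by simp
    show "m \<le> k + (m + n - k)" using km by simp
    fix t assume t: "t \<le> antidiag_span m n k"
    define r p where "r = k - m + t" and "p = m - k + t"
    define i s where "i = k - r" and "s = n - r"
    have s: "m = i + p" "k = i + r" "n = r + s" using t km by (auto simp: r_def p_def i_def s_def antidiag_span_def)
    show "\<alpha> t \<noteq> 0"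
      using q0 by (simp add: \<alpha>_def qfact_nonzero[OF q])
    show "A_eigval q n d l (k - m + t) = A_eigval q (m + n - k) d ?l' (m - k + t)"
    proof -
      have "2 * int r - int n = (int k - int m) + (2 * int p - int (m + n - k))"
        using s by simp
      then show ?thesis
        unfolding r_def[symmetric] p_def[symmetric] A_eigval_def using q0 by (simp add: power_int_add)
    qed
    have ij: "i \<le> m" "r \<le> n" "i \<le> k" "p \<le> m + n - k" using s by auto
    show "B_diag q m n d l (k - (k - m + t)) (k - m + t) = B_diag q k (m + n - k) d ?l' (m - (m - k + t)) (m - k + t)"
    proof -
      have idx: "k - r = i" "m - p = i" using s by simp_all
      show ?thesis
        unfolding r_def[symmetric] p_def[symmetric] idx
          B_diag_closed[OF q l d ij(1,2)] B_diag_closed[OF q \<open>?l' \<noteq> 0\<close> d ij(3,4)]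
        unfolding s by (simp add: algebra_simps)
    qed
    show "C_diag q m n d l (k - (k - m + t)) (k - m + t) = C_diag q k (m + n - k) d ?l' (m - (m - k + t)) (m - k + t)"
      unfolding r_def[symmetric] p_def[symmetric] C_diag_eq[OF l] C_diag_eq[OF \<open>?l' \<noteq> 0\<close>] unfolding s
      using q0 by (simp add: powi_split field_simps)
  next
    fix t assume t: "t < antidiag_span m n k"
    define r p where "r = k - m + t" and "p = m - k + t"
    define i s where "i = k - Suc r" and "s = n - Suc r"
    have s: "m = Suc (i + p)" "k = Suc (i + r)" "n = Suc (r + s)"
      using t km by (auto simp: r_def p_def i_def s_def antidiag_span_def)
    have nz: "qfact q r \<noteq> 0" "qfact q p \<noteq> 0" "qnum q (Suc r) \<noteq> 0" "qnum q (Suc p) \<noteq> 0"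
      using qfact_nonzero[OF q] qnum_nonzero[OF q] by auto
    show "\<alpha> (Suc t) * B_sub q m n d l (k - (k - m + Suc t)) (k - m + Suc t)
        = B_sub q k (m + n - k) d ?l' (m - (m - k + Suc t)) (m - k + Suc t) * \<alpha> t"
      unfolding \<alpha>_def add_Suc_right r_def[symmetric] p_def[symmetric] B_sub_def unfolding s
      using nz q0 l by (auto simp: powi_split qfact_Suc field_simps)
    show "\<alpha> t * B_super q m n d l (k - (k - m + t)) (k - m + t)
        = B_super q k (m + n - k) d ?l' (m - (m - k + t)) (m - k + t) * \<alpha> (Suc t)"
      unfolding \<alpha>_def add_Suc_right r_def[symmetric] p_def[symmetric] B_super_def unfolding s
      using nz q0 l d by (auto simp: powi_split qfact_Suc field_simps)
  qed (simp_all add: antidiag_span_def)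
qed

lemma Hq_iso_refl: "Hq_iso q m n d l \<theta> m n d l \<theta>"
  unfolding Hq_iso_def Let_def by (rule exI[of _ id]) simp

lemma Hq_iso_trans:
  assumes "Hq_iso q m n d l \<theta> m' n' d' l' \<theta>'" and "Hq_iso q m' n' d' l' \<theta>' m'' n'' d'' l'' \<theta>''"
  shows "Hq_iso q m n d l \<theta> m'' n'' d'' l'' \<theta>''"
proof -
  let ?V = "eig_space q m n d l \<theta>" and ?W = "eig_space q m' n' d' l' \<theta>'"
  obtain f where f: "bij_betw f ?V ?W"
    "\<forall>u\<in>?V. \<forall>w\<in>?V. f (vadd u w) = vadd (f u) (f w)" "\<forall>a. \<forall>u\<in>?V. f (vsmul a u) = vsmul a (f u)"
    "\<forall>u\<in>?V. f (actA q m n d l u) = actA q m' n' d' l' (f u)"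
    "\<forall>u\<in>?V. f (actB q m n d l u) = actB q m' n' d' l' (f u)"
    "\<forall>u\<in>?V. f (actC q m n d l u) = actC q m' n' d' l' (f u)"
    using assms(1) unfolding Hq_iso_def Let_def by blast
  obtain g where g: "bij_betw g ?W (eig_space q m'' n'' d'' l'' \<theta>'')"
    "\<forall>u\<in>?W. \<forall>w\<in>?W. g (vadd u w) = vadd (g u) (g w)" "\<forall>a. \<forall>u\<in>?W. g (vsmul a u) = vsmul a (g u)"
    "\<forall>u\<in>?W. g (actA q m' n' d' l' u) = actA q m'' n'' d'' l'' (g u)"
    "\<forall>u\<in>?W. g (actB q m' n' d' l' u) = actB q m'' n'' d'' l'' (g u)"
    "\<forall>u\<in>?W. g (actC q m' n' d' l' u) = actC q m'' n'' d'' l'' (g u)"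
    using assms(2) unfolding Hq_iso_def Let_def by blast
  have "f u \<in> ?W" if "u \<in> ?V" for u using f(1) that by (auto simp: bij_betw_def)
  then show ?thesis
    unfolding Hq_iso_def Let_def using f g bij_betw_trans[OF f(1) g(1)] by (intro exI[of _ "g \<circ> f"]) simp
qed

lemma Hq_iso_of_parameters:
  assumes q: "not_root_of_unity q" and l: "l \<noteq> 0" and d: "d \<in> {1, -1}" and km: "k \<le> m + n"
    and "(m', n', k', l') \<in> {(m, n, k, l), (m + n - k, k, n, l * q powi (int k - int n)),
      (k, m + n - k, m, l * q powi (int k - int m)), (n, m, m + n - k, l * q powi (2 * int k - int m - int n))}"
  shows "Hq_iso q m n d l (d * q powi (int m + int n - 2 * int k))
    m' n' d l' (d * q powi (int m' + int n' - 2 * int k'))"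
proof -
  have q0: "q \<noteq> 0" using q_nonzero[OF q] .
  have swap: "Hq_iso q m n d l (d * q powi (int m + int n - 2 * int k))
      n m d (l * q powi (2 * int k - int m - int n)) (d * q powi (int n + int m - 2 * int (m + n - k)))"
  proof -
    have "Hq_iso q k (m + n - k) d (l * q powi (int k - int m)) (d * q powi (int k + int (m + n - k) - 2 * int m))
        (k + (m + n - k) - m) m d (l * q powi (int k - int m) * q powi (int m - int (m + n - k)))
        (d * q powi (int (k + (m + n - k) - m) + int m - 2 * int (m + n - k)))"
      using l q0 by (intro Hq_iso_exchange_n_k[OF q _ d]) simp_all
    moreover have "k + (m + n - k) - m = n" using km by simp
    moreover have "q powi (int k - int m) * q powi (int m - int (m + n - k)) = q powi (2 * int k - int m - int n)"
      using km q0 by (simp add: power_int_add[symmetric] of_nat_diff algebra_simps)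
    ultimately show ?thesis using Hq_iso_trans[OF Hq_iso_exchange_m_k[OF q l d km]] by (simp add: mult.assoc)
  qed
  show ?thesis
    using assms(5) Hq_iso_refl Hq_iso_exchange_n_k[OF q l d km] Hq_iso_exchange_m_k[OF q l d km] swap
    by auto
qed

section \<open>Invariants of an isomorphism\<close>

definition lin_iso :: "(vec \<Rightarrow> vec) \<Rightarrow> vec set \<Rightarrow> vec set \<Rightarrow> bool" where
  "lin_iso f V W \<longleftrightarrow> bij_betw f V W \<and> (\<forall>u\<in>V. \<forall>w\<in>V. f (vadd u w) = vadd (f u) (f w))
     \<and> (\<forall>a. \<forall>u\<in>V. f (vsmul a u) = vsmul a (f u))"

lemma Hq_isoE:
  assumes "not_root_of_unity q" "d \<in> {1, -1}" "d' \<in> {1, -1}" "l \<noteq> 0" "l' \<noteq> 0"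
    and "Hq_iso q m n d l (d * q powi (int m + int n - 2 * int k)) m' n' d' l' (d' * q powi (int m' + int n' - 2 * int k'))"
  obtains f where "lin_iso f (antidiag m n k) (antidiag m' n' k')"
    "\<forall>u\<in>antidiag m n k. f (actA q m n d l u) = actA q m' n' d' l' (f u)"
    "\<forall>u\<in>antidiag m n k. f (actB q m n d l u) = actB q m' n' d' l' (f u)"
    "\<forall>u\<in>antidiag m n k. f (actC q m n d l u) = actC q m' n' d' l' (f u)"
  using assms unfolding Hq_iso_def Let_def lin_iso_def eig_space_eq_antidiag[OF assms(1,2,4)]
    eig_space_eq_antidiag[OF assms(1,3,5)] by blast

definition zero_vec :: vec where
  "zero_vec = (\<lambda>_ _. 0)"

lemma lin_iso_zero:
  assumes "lin_iso f V W" and "zero_vec \<in> V" shows "f zero_vec = zero_vec"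
proof -
  have "f (vsmul 0 zero_vec) = vsmul 0 (f zero_vec)" using assms unfolding lin_iso_def by blast
  moreover have "vsmul 0 x = zero_vec" for x by (simp add: vsmul_def zero_vec_def)
  ultimately show ?thesis by simp
qed

lemma lin_iso_nonzero:
  assumes "lin_iso f V W" and "zero_vec \<in> V" "u \<in> V" "u \<noteq> zero_vec" shows "f u \<noteq> zero_vec"
proof
  assume "f u = zero_vec"
  then have "f u = f zero_vec" using lin_iso_zero[OF assms(1,2)] by simp
  then show False using assms unfolding lin_iso_def bij_betw_def by (blast dest: inj_onD)
qed

definition A_spectrum :: "complex \<Rightarrow> nat \<Rightarrow> nat \<Rightarrow> nat \<Rightarrow> complex \<Rightarrow> complex \<Rightarrow> complex set" where
  "A_spectrum q m n k d l = {\<mu>. \<exists>c\<in>antidiag m n k. c \<noteq> zero_vec \<and> actA q m n d l c = vsmul \<mu> c}"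

lemma zero_vec_antidiag: "zero_vec \<in> antidiag m n k"
  by (simp add: antidiag_def zero_vec_def)

lemma vsmul_antidiag: "u \<in> antidiag m n k \<Longrightarrow> vsmul a u \<in> antidiag m n k"
  by (simp add: antidiag_def vsmul_def)

lemma actA_antidiag: "u \<in> antidiag m n k \<Longrightarrow> actA q m n d l u \<in> antidiag m n k"
  by (simp add: antidiag_def actA_def opK2inv_def)

lemma lin_iso_A_spectrum:
  assumes f: "lin_iso f (antidiag m n k) (antidiag m' n' k')"
    and A: "\<forall>u\<in>antidiag m n k. f (actA q m n d l u) = actA q m' n' d' l' (f u)"
  shows "A_spectrum q m n k d l = A_spectrum q m' n' k' d' l'"
proof (intro set_eqI iffI; unfold A_spectrum_def mem_Collect_eq)
  fix \<mu> assume "\<exists>c\<in>antidiag m n k. c \<noteq> zero_vec \<and> actA q m n d l c = vsmul \<mu> c"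
  then obtain c where c: "c \<in> antidiag m n k" "c \<noteq> zero_vec" "actA q m n d l c = vsmul \<mu> c" by blast
  have fc: "f c \<in> antidiag m' n' k'" using f c(1) unfolding lin_iso_def bij_betw_def by blast
  have fc0: "f c \<noteq> zero_vec" by (rule lin_iso_nonzero[OF f zero_vec_antidiag c(1,2)])
  have "f (vsmul \<mu> c) = vsmul \<mu> (f c)" using f c(1) unfolding lin_iso_def by blast
  moreover have "f (actA q m n d l c) = actA q m' n' d' l' (f c)" using A c(1) by blast
  ultimately have "actA q m' n' d' l' (f c) = vsmul \<mu> (f c)" using c(3) by simp
  with fc fc0 show "\<exists>c\<in>antidiag m' n' k'. c \<noteq> zero_vec \<and> actA q m' n' d' l' c = vsmul \<mu> c" by blast
next
  fix \<mu> assume "\<exists>c\<in>antidiag m' n' k'. c \<noteq> zero_vec \<and> actA q m' n' d' l' c = vsmul \<mu> c"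
  then obtain w where w: "w \<in> antidiag m' n' k'" "w \<noteq> zero_vec" "actA q m' n' d' l' w = vsmul \<mu> w" by blast
  obtain c where c: "c \<in> antidiag m n k" "w = f c"
    using f w(1) unfolding lin_iso_def bij_betw_def by blast
  have "f (vsmul \<mu> c) = vsmul \<mu> (f c)" using f c(1) unfolding lin_iso_def by blast
  moreover have "f (actA q m n d l c) = actA q m' n' d' l' (f c)" using A c(1) by blast
  ultimately have "f (actA q m n d l c) = f (vsmul \<mu> c)" using c(2) w(3) by simp
  then have "actA q m n d l c = vsmul \<mu> c"
    using f c(1) actA_antidiag vsmul_antidiag unfolding lin_iso_def bij_betw_def by (meson inj_onD)
  moreover have "c \<noteq> zero_vec" using c w(2) lin_iso_zero[OF f zero_vec_antidiag] by auto
  ultimately show "\<exists>c\<in>antidiag m n k. c \<noteq> zero_vec \<and> actA q m n d l c = vsmul \<mu> c" using c(1) by blast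
qed

lemma A_eigval_Suc: "q \<noteq> 0 \<Longrightarrow> A_eigval q n d l (Suc j) = A_eigval q n d l j * q^2"
  by (simp add: A_eigval_def powi_split field_simps)

lemma A_eigval_nonzero: "q \<noteq> 0 \<Longrightarrow> d \<in> {1, -1} \<Longrightarrow> l \<noteq> 0 \<Longrightarrow> A_eigval q n d l j \<noteq> 0"
  by (auto simp: A_eigval_def)

lemma A_eigval_eq_iff:
  assumes "not_root_of_unity q" "d \<in> {1, -1}" "l \<noteq> 0"
  shows "A_eigval q n d l j = A_eigval q n d l j' \<longleftrightarrow> j = j'"
  using assms by (auto simp: A_eigval_def powi_eq_iff)

lemma actA_apply: "d \<in> {1, -1} \<Longrightarrow> actA q m n d l c i j = A_eigval q n d l j * c i j"
  by (simp add: actA_eq_tridiag tridiag_def)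

definition basis_vec :: "nat \<Rightarrow> nat \<Rightarrow> vec" where
  "basis_vec i0 j0 = (\<lambda>i j. if i = i0 \<and> j = j0 then 1 else 0)"

lemma basis_vec_nonzero: "basis_vec i j \<noteq> zero_vec"
  by (metis basis_vec_def zero_neq_one zero_vec_def)

lemma basis_vec_antidiag: "on_antidiag m n k i j \<Longrightarrow> basis_vec i j \<in> antidiag m n k"
  by (auto simp: antidiag_def basis_vec_def)

lemma A_spectrum_eq:
  assumes d: "d \<in> {1, -1}" and km: "k \<le> m + n"
  shows "A_spectrum q m n k d l = A_eigval q n d l ` {k - m..min n k}"
proof (intro set_eqI iffI)
  fix \<mu> assume "\<mu> \<in> A_spectrum q m n k d l"
  then obtain c where c: "c \<in> antidiag m n k" "c \<noteq> zero_vec" "actA q m n d l c = vsmul \<mu> c"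
    by (auto simp: A_spectrum_def)
  then obtain i j where nz: "c i j \<noteq> 0" by (auto simp: zero_vec_def fun_eq_iff)
  have "A_eigval q n d l j * c i j = \<mu> * c i j"
    using fun_cong[OF fun_cong[OF c(3)], of i j] by (simp add: actA_apply[OF d] vsmul_def)
  then have "\<mu> = A_eigval q n d l j" using nz by simp
  moreover have "on_antidiag m n k i j" using c(1) nz by (auto simp: antidiag_def)
  ultimately show "\<mu> \<in> A_eigval q n d l ` {k - m..min n k}" by (auto simp: on_antidiag_iff)
next
  fix \<mu> assume "\<mu> \<in> A_eigval q n d l ` {k - m..min n k}"
  then obtain j where j: "j \<in> {k - m..min n k}" "\<mu> = A_eigval q n d l j" by blast
  then have "basis_vec (k - j) j \<in> antidiag m n k" by (intro basis_vec_antidiag) (auto simp: on_antidiag_iff)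
  moreover have "actA q m n d l (basis_vec (k - j) j) = vsmul \<mu> (basis_vec (k - j) j)"
    using j by (auto simp: fun_eq_iff actA_apply[OF d] vsmul_def basis_vec_def)
  ultimately show "\<mu> \<in> A_spectrum q m n k d l" using basis_vec_nonzero by (auto simp: A_spectrum_def)
qed

lemma geometric_image_eq:
  assumes q: "not_root_of_unity q" and x: "x \<noteq> 0" "x' \<noteq> 0" and "lo \<le> hi" "lo' \<le> hi'"
    and eq: "(\<lambda>j. x * q powi (2 * int j)) ` {lo..hi} = (\<lambda>j. x' * q powi (2 * int j)) ` {lo'..hi'}"
  shows "x * q powi (2 * int lo) = x' * q powi (2 * int lo')" and "hi - lo = hi' - lo'"
proof -
  have match: "\<exists>j'\<in>{lo'..hi'}. x * q powi (2 * int j) = x' * q powi (2 * int j')" if "j \<in> {lo..hi}" for j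
    using eq that by blast
  have match': "\<exists>j\<in>{lo..hi}. x' * q powi (2 * int j') = x * q powi (2 * int j)" if "j' \<in> {lo'..hi'}" for j'
    using eq that by (metis (no_types, lifting) image_iff)
  have cross: "2 * int a + 2 * int c = 2 * int b + 2 * int e"
    if "x * q powi (2 * int a) = x' * q powi (2 * int b)" "x' * q powi (2 * int c) = x * q powi (2 * int e)"
    for a b c e using powi_cross[OF q x that] .
  obtain p' where p': "p' \<in> {lo'..hi'}" "x * q powi (2 * int lo) = x' * q powi (2 * int p')"
    using match[of lo] assms(4) by auto
  obtain p where p: "p \<in> {lo..hi}" "x' * q powi (2 * int lo') = x * q powi (2 * int p)"
    using match'[of lo'] assms(5) by auto
  have "p' = lo'" using cross[OF p'(2) p(2)] p(1) p'(1) by simp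
  then show lo: "x * q powi (2 * int lo) = x' * q powi (2 * int lo')" using p'(2) by simp
  obtain r' where r': "r' \<in> {lo'..hi'}" "x * q powi (2 * int hi) = x' * q powi (2 * int r')"
    using match[of hi] assms(4) by auto
  obtain r where r: "r \<in> {lo..hi}" "x' * q powi (2 * int hi') = x * q powi (2 * int r)"
    using match'[of hi'] assms(5) by auto
  have "r' = hi'" using cross[OF r'(2) r(2)] r(1) r'(1) by simp
  then have "x * q powi (2 * int hi) = x' * q powi (2 * int hi')" using r'(2) by simp
  then show "hi - lo = hi' - lo'" using cross[OF _ lo[symmetric]] assms(4,5) by fastforce
qed

text \<open>On a vector supported in the lowest column, \<open>T c - D c\<close> lives in the next column, where \<open>A\<close>
acts by \<open>X q\<^sup>2\<close>; so \<open>A - X q\<^sup>2\<close> isolates the diagonal entry of \<open>T\<close>.\<close>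

lemma actA_tridiag_lowest:
  fixes l :: complex
  assumes q0: "q \<noteq> 0" and d: "d \<in> {1, -1}" and supp: "band_supported m n L U"
    and c: "\<And>i j. c i j \<noteq> 0 \<Longrightarrow> i = k - (k - m) \<and> j = k - m"
  defines "X \<equiv> A_eigval q n d l (k - m)"
  shows "actA q m n d l (tridiag D L U c)
    = vadd (vsmul (X * q^2) (tridiag D L U c)) (vsmul ((X - X * q^2) * antidiag_at m k D 0) c)"
proof (intro ext)
  fix i j
  have L: "L i j * c (i + 1) (j - 1) = 0 \<or> j = Suc (k - m)"
    using c[of "i + 1" "j - 1"] supp by (cases j) (auto simp: band_supported_def)
  have U: "U i j * c (i - 1) (j + 1) = 0"
  proof (rule ccontr)
    assume "U i j * c (i - 1) (j + 1) \<noteq> 0"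
    then have "0 < i" "i \<le> m" "i - 1 = k - (k - m)" "j + 1 = k - m"
      using c[of "i - 1" "j + 1"] supp by (auto simp: band_supported_def)
    then show False by linarith
  qed
  show "actA q m n d l (tridiag D L U c) i j
      = vadd (vsmul (X * q^2) (tridiag D L U c)) (vsmul ((X - X * q^2) * antidiag_at m k D 0) c) i j"
  proof (cases "j = Suc (k - m)")
    case True
    then show ?thesis using c[of i j] A_eigval_Suc[OF q0]
      by (auto simp: actA_apply[OF d] vadd_def vsmul_def X_def)
  next
    case False
    then have "tridiag D L U c i j = D i j * c i j" using L U by (auto simp: tridiag_def)
    then show ?thesis using c[of i j]
      by (cases "c i j = 0") (auto simp: actA_apply[OF d] vadd_def vsmul_def X_def antidiag_at_def algebra_simps)
  qed
qed

lemma lin_iso_lowest_basis_vec: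
  assumes q: "not_root_of_unity q" and d: "d \<in> {1, -1}" and d': "d' \<in> {1, -1}"
    and l': "l' \<noteq> 0" and km: "k \<le> m + n"
    and f: "lin_iso f (antidiag m n k) (antidiag m' n' k')"
    and X: "A_eigval q n d l (k - m) = A_eigval q n' d' l' (k' - m')"
    and A: "\<forall>u\<in>antidiag m n k. f (actA q m n d l u) = actA q m' n' d' l' (f u)"
  shows "f (basis_vec (k - (k - m)) (k - m)) \<in> antidiag m' n' k'"
    and "f (basis_vec (k - (k - m)) (k - m)) \<noteq> zero_vec"
    and "f (basis_vec (k - (k - m)) (k - m)) i j \<noteq> 0 \<Longrightarrow> i = k' - (k' - m') \<and> j = k' - m'"
proof -
  let ?u = "basis_vec (k - (k - m)) (k - m)"
  have u: "?u \<in> antidiag m n k" using km by (intro basis_vec_antidiag) (auto simp: on_antidiag_def)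
  then show w: "f ?u \<in> antidiag m' n' k'" using f unfolding lin_iso_def bij_betw_def by blast
  show "f ?u \<noteq> zero_vec" by (rule lin_iso_nonzero[OF f zero_vec_antidiag u basis_vec_nonzero])
  have "actA q m n d l ?u = vsmul (A_eigval q n d l (k - m)) ?u"
    by (auto simp: fun_eq_iff actA_apply[OF d] vsmul_def basis_vec_def)
  moreover have "f (vsmul a ?u) = vsmul a (f ?u)" for a using f u unfolding lin_iso_def by blast
  ultimately have Aw: "actA q m' n' d' l' (f ?u) = vsmul (A_eigval q n' d' l' (k' - m')) (f ?u)"
    using A u X by metis
  assume nz: "f ?u i j \<noteq> 0"
  have "A_eigval q n' d' l' j * f ?u i j = A_eigval q n' d' l' (k' - m') * f ?u i j"
    using fun_cong[OF fun_cong[OF Aw], of i j] by (simp add: actA_apply[OF d'] vsmul_def)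
  then have "j = k' - m'" using nz A_eigval_eq_iff[OF q d' l'] by simp
  moreover have "on_antidiag m' n' k' i j" using w nz by (auto simp: antidiag_def)
  ultimately show "i = k' - (k' - m') \<and> j = k' - m'" by (auto simp: on_antidiag_def)
qed

lemma lin_iso_lowest_diag:
  assumes q: "not_root_of_unity q" and d: "d \<in> {1, -1}" and d': "d' \<in> {1, -1}"
    and l: "l \<noteq> 0" and l': "l' \<noteq> 0" and km: "k \<le> m + n"
    and f: "lin_iso f (antidiag m n k) (antidiag m' n' k')"
    and X: "A_eigval q n d l (k - m) = A_eigval q n' d' l' (k' - m')"
    and A: "\<forall>u\<in>antidiag m n k. f (actA q m n d l u) = actA q m' n' d' l' (f u)"
    and T: "\<forall>u\<in>antidiag m n k. f (tridiag D L U u) = tridiag D' L' U' (f u)"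
    and supp: "band_supported m n L U" and supp': "band_supported m' n' L' U'"
  shows "antidiag_at m k D 0 = antidiag_at m' k' D' 0"
proof -
  have q0: "q \<noteq> 0" using q_nonzero[OF q] .
  let ?X = "A_eigval q n d l (k - m)"
  let ?u = "basis_vec (k - (k - m)) (k - m)"
  let ?T = "tridiag D L U" and ?T' = "tridiag D' L' U'"
  define w where "w = f ?u"
  note w = lin_iso_lowest_basis_vec[OF q d d' l' km f X A, folded w_def]
  have lin: "f (vadd u v) = vadd (f u) (f v)" "f (vsmul a u) = vsmul a (f u)"
    if "u \<in> antidiag m n k" "v \<in> antidiag m n k" for u v a
    using f that unfolding lin_iso_def by blast+
  have u: "?u \<in> antidiag m n k" using km by (intro basis_vec_antidiag) (auto simp: on_antidiag_def)
  have Tu: "?T ?u \<in> antidiag m n k" by (rule tridiag_antidiag[OF supp u])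
  have u_supp: "i = k - (k - m) \<and> j = k - m" if "?u i j \<noteq> 0" for i j
    using that by (simp add: basis_vec_def split: if_splits)
  have "f (actA q m n d l (?T ?u))
      = f (vadd (vsmul (?X * q^2) (?T ?u)) (vsmul ((?X - ?X * q^2) * antidiag_at m k D 0) ?u))"
    using actA_tridiag_lowest[OF q0 d supp u_supp, where l = l and D = D] by simp
  also have "\<dots> = vadd (vsmul (?X * q^2) (?T' w)) (vsmul ((?X - ?X * q^2) * antidiag_at m k D 0) w)"
    using Tu u T by (simp add: lin vsmul_antidiag w_def)
  moreover have "f (actA q m n d l (?T ?u))
      = vadd (vsmul (?X * q^2) (?T' w)) (vsmul ((?X - ?X * q^2) * antidiag_at m' k' D' 0) w)"
    using A T Tu u actA_tridiag_lowest[OF q0 d' supp' w(3), where l = l' and D = D'] X by (simp add: w_def)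
  ultimately have "vsmul ((?X - ?X * q^2) * antidiag_at m k D 0) w = vsmul ((?X - ?X * q^2) * antidiag_at m' k' D' 0) w"
    by (simp add: fun_eq_iff vadd_def)
  moreover obtain i j where "w i j \<noteq> 0" using w(2) by (auto simp: zero_vec_def fun_eq_iff)
  moreover have "?X - ?X * q^2 \<noteq> 0"
    using A_eigval_nonzero[OF q0 d l] q by (auto simp: not_root_of_unity_def)
  ultimately show ?thesis by (auto simp: fun_eq_iff vsmul_def dest: spec[of _ i] spec[of _ j])
qed

lemma A_eigval_geometric: "q \<noteq> 0 \<Longrightarrow> A_eigval q n d l = (\<lambda>j. (d * l * q powi (- int n)) * q powi (2 * int j))"
  by (simp add: fun_eq_iff A_eigval_def power_int_diff power_int_minus field_simps)

lemma Hq_iso_invariants: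
  assumes q: "not_root_of_unity q" and d: "d \<in> {1, -1}" and d': "d' \<in> {1, -1}"
    and l: "l \<noteq> 0" and l': "l' \<noteq> 0" and km: "k \<le> m + n" and km': "k' \<le> m' + n'"
    and iso: "Hq_iso q m n d l (d * q powi (int m + int n - 2 * int k))
      m' n' d' l' (d' * q powi (int m' + int n' - 2 * int k'))"
  shows "A_eigval q n d l (k - m) = A_eigval q n' d' l' (k' - m')"
    and "antidiag_span m n k = antidiag_span m' n' k'"
    and "antidiag_at m k (C_diag q m n d l) 0 = antidiag_at m' k' (C_diag q m' n' d' l') 0"
    and "antidiag_at m k (B_diag q m n d l) 0 = antidiag_at m' k' (B_diag q m' n' d' l') 0"
proof -
  have q0: "q \<noteq> 0" using q_nonzero[OF q] .
  obtain f where f: "lin_iso f (antidiag m n k) (antidiag m' n' k')"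
    and A: "\<forall>u\<in>antidiag m n k. f (actA q m n d l u) = actA q m' n' d' l' (f u)"
    and B: "\<forall>u\<in>antidiag m n k. f (actB q m n d l u) = actB q m' n' d' l' (f u)"
    and C: "\<forall>u\<in>antidiag m n k. f (actC q m n d l u) = actC q m' n' d' l' (f u)"
    using Hq_isoE[OF q d d' l l' iso] by blast
  have "A_eigval q n d l ` {k - m..min n k} = A_eigval q n' d' l' ` {k' - m'..min n' k'}"
    using lin_iso_A_spectrum[OF f A] A_spectrum_eq[OF d km] A_spectrum_eq[OF d' km'] by simp
  then have "(\<lambda>j. (d * l * q powi (- int n)) * q powi (2 * int j)) ` {k - m..min n k}
      = (\<lambda>j. (d' * l' * q powi (- int n')) * q powi (2 * int j)) ` {k' - m'..min n' k'}"
    by (simp only: A_eigval_geometric[OF q0])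
  from geometric_image_eq[OF q _ _ _ _ this]
  show "A_eigval q n d l (k - m) = A_eigval q n' d' l' (k' - m')"
    and "antidiag_span m n k = antidiag_span m' n' k'"
    using km km' d d' l l' q0 by (auto simp: A_eigval_geometric[OF q0] antidiag_span_def)
  then show "antidiag_at m k (C_diag q m n d l) 0 = antidiag_at m' k' (C_diag q m' n' d' l') 0"
    and "antidiag_at m k (B_diag q m n d l) 0 = antidiag_at m' k' (B_diag q m' n' d' l') 0"
    using lin_iso_lowest_diag[OF q d d' l l' km f _ A, where D = "C_diag q m n d l"] C
      lin_iso_lowest_diag[OF q d d' l l' km f _ A, where D = "B_diag q m n d l"] B
      band_supported_B band_supported_C by (simp_all add: actB_eq_tridiag actC_eq_tridiag)
qed

lemma invariants_closed_forms:
  fixes q l d :: complex and m n k :: nat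
  assumes q: "not_root_of_unity q" and l: "l \<noteq> 0" and d: "d \<in> {1, -1}" and km: "k \<le> m + n"
  defines "S \<equiv> int m + int n" and "a \<equiv> \<bar>int m - int k\<bar>" and "b \<equiv> \<bar>int k - int n\<bar>"
  shows "A_eigval q n d l (k - m) = d * l * q powi (int k - S + a)"
    and "antidiag_at m k (C_diag q m n d l) 0 = l * q powi (int k - a)"
    and "2 * int (antidiag_span m n k) = S - a - b"
    and "antidiag_at m k (B_diag q m n d l) 0
      = d * (q powi (S + 1) - q powi (S - 2 * a - 1) + q powi (b - a - 1) + q powi (- a - b - 1))"
proof -
  have q0: "q \<noteq> 0" using q_nonzero[OF q] .
  have J: "int (k - m) = (if m \<le> k then int k - int m else 0)" by auto
  have I: "int (k - (k - m)) = (if m \<le> k then int m else int k)" by auto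
  have A: "a = (if m \<le> k then int k - int m else int m - int k)" unfolding a_def by auto
  have B: "b = (if n \<le> k then int k - int n else int n - int k)" unfolding b_def by auto
  show "A_eigval q n d l (k - m) = d * l * q powi (int k - S + a)"
    unfolding A_eigval_def J A S_def by (cases "m \<le> k") (auto simp: algebra_simps)
  show "antidiag_at m k (C_diag q m n d l) 0 = l * q powi (int k - a)"
    unfolding antidiag_at_def C_diag_eq[OF l] by (cases "m \<le> k") (auto simp: A of_nat_diff algebra_simps)
  show "2 * int (antidiag_span m n k) = S - a - b"
    unfolding S_def A B antidiag_span_def using km by (cases "m \<le> k"; cases "n \<le> k") (auto simp: min_def)
  have v: "k - (k - m) \<le> m" "k - m \<le> n" using km by auto
  show "antidiag_at m k (B_diag q m n d l) 0
      = d * (q powi (S + 1) - q powi (S - 2 * a - 1) + q powi (b - a - 1) + q powi (- a - b - 1))"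
    unfolding antidiag_at_def add_0_right B_diag_closed[OF q l d v] of_nat_diff I J A B S_def using q0
    by (cases "m \<le> k"; cases "n \<le> k") (auto simp: powi_split field_simps power2_eq_square)
qed

lemma invariant_values_determine:
  fixes S a b S' a' b' :: int and k k' :: nat and d d' l l' :: complex
  assumes q: "not_root_of_unity q" and d: "d \<in> {1, -1}" and d': "d' \<in> {1, -1}" and l: "l \<noteq> 0"
    and nonneg: "0 \<le> S" "0 \<le> a'" "0 \<le> b'"
    and E1: "d * l * q powi (int k - S + a) = d' * l' * q powi (int k' - S' + a')"
    and E2: "l * q powi (int k - a) = l' * q powi (int k' - a')"
    and E3: "S - a - b = S' - a' - b'"
    and E4: "d * (q powi (S + 1) - q powi (S - 2 * a - 1) + q powi (b - a - 1) + q powi (- a - b - 1))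
      = d' * (q powi (S' + 1) - q powi (S' - 2 * a' - 1) + q powi (b' - a' - 1) + q powi (- a' - b' - 1))"
  shows "d = d'" and "S = S'" and "a = a'" and "b = b'" and "l' = l * q powi (int k - int k')"
proof -
  have q0: "q \<noteq> 0" using q_nonzero[OF q] .
  have split: "d * l * q powi (int k - S + a) = d * q powi (2 * a - S) * (l * q powi (int k - a))"
    for d l :: complex and k :: nat and S a :: int
  proof -
    have "int k - S + a = (2 * a - S) + (int k - a)" by simp
    then have "q powi (int k - S + a) = q powi (2 * a - S) * q powi (int k - a)"
      using power_int_add[of q "2 * a - S" "int k - a"] q0 by (simp add: add.commute)
    then show ?thesis by (simp add: mult_ac)
  qed
  have "d * q powi (2 * a - S) * (l * q powi (int k - a)) = d' * q powi (2 * a' - S') * (l * q powi (int k - a))"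
    using E1 E2 split by metis
  then have "d * q powi (2 * a - S) = d' * q powi (2 * a' - S')" using l q0 by simp
  then have dd: "d = d'" and ea: "2 * a - S = 2 * a' - S'" using sign_powi_eq_iff[OF q d d'] by auto
  then show "d = d'" by simp
  have x: "S - 2 * a - 1 = S' - 2 * a' - 1" "b - a - 1 = b' - a' - 1" using ea E3 by simp_all
  have "q powi (S + 1) - q powi (S - 2 * a - 1) + q powi (b - a - 1) + q powi (- a - b - 1)
      = q powi (S' + 1) - q powi (S' - 2 * a' - 1) + q powi (b' - a' - 1) + q powi (- a' - b' - 1)"
    using E4 dd d by auto
  then have "q powi (S + 1) + q powi (- a - b - 1) = q powi (S' + 1) + q powi (- a' - b' - 1)"
    unfolding x by (simp add: algebra_simps)
  moreover have "(S + 1) + (- a - b - 1) = (S' + 1) + (- a' - b' - 1)" using E3 by simp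
  ultimately have "S + 1 = S' + 1 \<or> S + 1 = - a' - b' - 1"
    using powi_sum_eq[OF q] by blast
  then show SS: "S = S'" using nonneg by linarith
  show aa: "a = a'" using ea SS by simp
  show "b = b'" using E3 SS aa by simp
  have "l' * q powi (int k' - a) = l * q powi (int k - a)" using E2 aa by simp
  then show "l' = l * q powi (int k - int k')"
    using q0 by (simp add: power_int_diff field_simps)
qed

lemma Hq_iso_parameters:
  assumes q: "not_root_of_unity q" and d: "d \<in> {1, -1}" and d': "d' \<in> {1, -1}"
    and l: "l \<noteq> 0" and l': "l' \<noteq> 0" and km: "k \<le> m + n" and km': "k' \<le> m' + n'"
    and iso: "Hq_iso q m n d l (d * q powi (int m + int n - 2 * int k))
      m' n' d' l' (d' * q powi (int m' + int n' - 2 * int k'))"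
  shows "d = d'" and "int m' + int n' = int m + int n" and "\<bar>int m' - int k'\<bar> = \<bar>int m - int k\<bar>"
    and "\<bar>int k' - int n'\<bar> = \<bar>int k - int n\<bar>" and "l' = l * q powi (int k - int k')"
proof -
  define S a b where "S = int m + int n" and "a = \<bar>int m - int k\<bar>" and "b = \<bar>int k - int n\<bar>"
  define S' a' b' where "S' = int m' + int n'" and "a' = \<bar>int m' - int k'\<bar>" and "b' = \<bar>int k' - int n'\<bar>"
  note F = invariants_closed_forms[OF q l d km, folded S_def a_def b_def]
  note F' = invariants_closed_forms[OF q l' d' km', folded S'_def a'_def b'_def]
  note E = Hq_iso_invariants[OF q d d' l l' km km' iso]
  have nonneg: "0 \<le> S" "0 \<le> a'" "0 \<le> b'" by (simp_all add: S_def a'_def b'_def)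
  have E1: "d * l * q powi (int k - S + a) = d' * l' * q powi (int k' - S' + a')"
    using E(1) F(1) F'(1) by simp
  have E2: "l * q powi (int k - a) = l' * q powi (int k' - a')" using E(3) F(2) F'(2) by simp
  have E3: "S - a - b = S' - a' - b'" using E(2) F(3) F'(3) by simp
  have E4: "d * (q powi (S + 1) - q powi (S - 2 * a - 1) + q powi (b - a - 1) + q powi (- a - b - 1))
      = d' * (q powi (S' + 1) - q powi (S' - 2 * a' - 1) + q powi (b' - a' - 1) + q powi (- a' - b' - 1))"
    using E(4) F(4) F'(4) by simp
  note eqs = invariant_values_determine[OF q d d' l nonneg E1 E2 E3 E4]
  from eqs show "d = d'" and "int m' + int n' = int m + int n" and "\<bar>int m' - int k'\<bar> = \<bar>int m - int k\<bar>"
    and "\<bar>int k' - int n'\<bar> = \<bar>int k - int n\<bar>" and "l' = l * q powi (int k - int k')"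
    by (simp_all add: S_def a_def b_def S'_def a'_def b'_def)
qed

lemma listed_parameters_of_invariants:
  fixes m n k m' n' k' :: nat and q l l' :: complex
  assumes km: "k \<le> m + n" and S: "int m' + int n' = int m + int n"
    and a: "\<bar>int m' - int k'\<bar> = \<bar>int m - int k\<bar>" and b: "\<bar>int k' - int n'\<bar> = \<bar>int k - int n\<bar>"
    and l': "l' = l * q powi (int k - int k')"
  shows "(m', n', k', l') \<in> {(m, n, k, l), (m + n - k, k, n, l * q powi (int k - int n)),
    (k, m + n - k, m, l * q powi (int k - int m)), (n, m, m + n - k, l * q powi (2 * int k - int m - int n))}"
proof -
  have "int m' - int k' = int m - int k \<or> int m' - int k' = int k - int m" using a by (auto simp: abs_eq_iff)
  moreover have "int k' - int n' = int k - int n \<or> int k' - int n' = int n - int k" using b by (auto simp: abs_eq_iff)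
  ultimately show ?thesis
  proof (elim disjE)
    assume "int m' - int k' = int m - int k" "int k' - int n' = int k - int n"
    then have "m' = m" "n' = n" "k' = k" using S by linarith+
    then show ?thesis by (simp add: l')
  next
    assume "int m' - int k' = int m - int k" "int k' - int n' = int n - int k"
    then have "m' = m + n - k" "n' = k" "k' = n" using S km by linarith+
    then show ?thesis by (simp add: l')
  next
    assume "int m' - int k' = int k - int m" "int k' - int n' = int k - int n"
    then have "m' = k" "n' = m + n - k" "k' = m" using S km by linarith+
    then show ?thesis by (simp add: l')
  next
    assume "int m' - int k' = int k - int m" "int k' - int n' = int n - int k"
    then have "m' = n" "n' = m" "k' = m + n - k" using S km by linarith+
    moreover have "int k - int (m + n - k) = 2 * int k - int m - int n" using km by simp
    ultimately show ?thesis unfolding l' by (metis insertCI)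
  qed
qed

theorem mainTheorem13:
  fixes q :: complex and m n m' n' k k' :: nat and dl dl' lam lam' :: complex
  assumes "q \<noteq> 0" and "\<forall>r::nat. 0 < r \<longrightarrow> q ^ r \<noteq> 1"
    and "dl \<in> {1, -1}" and "dl' \<in> {1, -1}"
    and "lam \<noteq> 0" and "lam' \<noteq> 0"
    and "k \<le> m + n" and "k' \<le> m' + n'"
  shows "Hq_iso q m n dl lam (dl * q powi (int m + int n - 2 * int k))
                 m' n' dl' lam' (dl' * q powi (int m' + int n' - 2 * int k'))
         \<longleftrightarrow> dl = dl' \<and>
             (m', n', k', lam') \<in>
               {(m, n, k, lam),
                (m + n - k, k, n, lam * q powi (int k - int n)),
                (k, m + n - k, m, lam * q powi (int k - int m)),
                (n, m, m + n - k, lam * q powi (2 * int k - int m - int n))}"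
proof -
  have q: "not_root_of_unity q" using assms(1,2) by (simp add: not_root_of_unity_def)
  show ?thesis
    apply (intro iffI)
    subgoal premises iso
      using Hq_iso_parameters[OF q assms(3-8) iso] listed_parameters_of_invariants[OF assms(7)] by blast
    subgoal using Hq_iso_of_parameters[OF q assms(5,3,7)] by blast
    done
qed

end
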